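(* Let $(G,\sigma)$ be a connection graph. Then $\sigma$ is absolutely inconsistent (i.e. the connection Laplacian $\mathcal{L}^\sigma$ is invertible) if and only if for every $i\in V$ the matrix $I_{d\times d}-\Omega^1_i$ is positive definite.
   Context: A connection graph $(G,\sigma)$: finite connected weighted graph $G=(V,E,W)$, $V=\{1,\dots,n\}$, $w_{ij}>0$ iff $\{i,j\}\in E$, $\deg(i)=\sum_j w_{ij}$, and $\sigma$ mapping oriented edges to $\mathsf{O}(d)$ with $\sigma_{ji}=\sigma_{ij}^{\mathrm T}$. $\mathcal{L}^\sigma$ is the $nd\times nd$ block matrix with blocks $\deg(i)I_d$ on the diagonal, $-w_{ij}\sigma_{ij}$ for $i\sim j$, $0$ otherwise. Let $(X_t)$ be the simple random walk with transition probabilities $w_{ij}/\deg(i)$, $T^1_i=\inf\{t\ge1: X_t=i\}$, and $\Omega^1_i=\mathbb{E}\big[\prod_{\ell=1}^{T^1_i}\sigma_{X_{\ell-1}X_\ell}\mid X_0=i\big]$ (ordered product). *)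

theory Defs
  imports "HOL-Analysis.Analysis"
begin

text \<open>Weighted graph on a finite vertex type 'v, given by weights w (w i j > 0 iff i,j adjacent).\<close>

definition vdeg :: "('v::finite \<Rightarrow> 'v \<Rightarrow> real) \<Rightarrow> 'v \<Rightarrow> real" where
  "vdeg w i = (\<Sum>j\<in>UNIV. w i j)"

definition connection_graph ::
  "('v::finite \<Rightarrow> 'v \<Rightarrow> real) \<Rightarrow> ('v \<Rightarrow> 'v \<Rightarrow> real^'d::finite^'d) \<Rightarrow> bool" where
  "connection_graph w \<sigma> \<longleftrightarrow>
     (\<forall>i j. w i j \<ge> 0) \<and> (\<forall>i j. w i j = w j i) \<and> (\<forall>i. w i i = 0) \<and>
     (\<forall>i j. (i, j) \<in> ({(a, b). w a b > 0})\<^sup>*) \<and>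
     (\<forall>i j. w i j > 0 \<longrightarrow> orthogonal_matrix (\<sigma> i j) \<and> \<sigma> j i = transpose (\<sigma> i j))"

definition conn_laplacian ::
  "('v::finite \<Rightarrow> 'v \<Rightarrow> real) \<Rightarrow> ('v \<Rightarrow> 'v \<Rightarrow> real^'d::finite^'d) \<Rightarrow> real^('v \<times> 'd)^('v \<times> 'd)" where
  "conn_laplacian w \<sigma> = (\<chi> p q.
     if fst p = fst q then (if snd p = snd q then vdeg w (fst p) else 0)
     else if w (fst p) (fst q) > 0 then - w (fst p) (fst q) * (\<sigma> (fst p) (fst q) $ snd p $ snd q)
     else 0)"

fun walk_prod :: "('v \<Rightarrow> 'v \<Rightarrow> real^'d::finite^'d) \<Rightarrow> 'v list \<Rightarrow> real^'d^'d" where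
  "walk_prod \<sigma> (x # y # rest) = \<sigma> x y ** walk_prod \<sigma> (y # rest)"
| "walk_prod \<sigma> _ = mat 1"

text \<open>Probability that the simple random walk started at x0 follows the walk x0 x1 ... xT.\<close>
fun walk_prob :: "('v::finite \<Rightarrow> 'v \<Rightarrow> real) \<Rightarrow> 'v list \<Rightarrow> real" where
  "walk_prob w (x # y # rest) = (w x y / vdeg w x) * walk_prob w (y # rest)"
| "walk_prob w _ = 1"

text \<open>Walks x0 = i, x1, ..., xT = i with T >= 1 and x_l ~= i for 0 < l < T, along edges:
  the possible trajectories up to the first return time T^1_i.\<close>
definition first_return_walks :: "('v::finite \<Rightarrow> 'v \<Rightarrow> real) \<Rightarrow> 'v \<Rightarrow> 'v list set" where
  "first_return_walks w i = {p. length p \<ge> 2 \<and> hd p = i \<and> last p = i \<and>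
      (\<forall>l. 0 < l \<and> l < length p - 1 \<longrightarrow> p ! l \<noteq> i) \<and>
      (\<forall>l. l + 1 < length p \<longrightarrow> w (p ! l) (p ! (l + 1)) > 0)}"

text \<open>Omega^1_i = E[ prod_{l=1}^{T^1_i} sigma_{X_{l-1} X_l} | X_0 = i ], written out as the
  expectation over the (countably many) possible trajectories.\<close>
definition Omega1 ::
  "('v::finite \<Rightarrow> 'v \<Rightarrow> real) \<Rightarrow> ('v \<Rightarrow> 'v \<Rightarrow> real^'d::finite^'d) \<Rightarrow> 'v \<Rightarrow> real^'d^'d" where
  "Omega1 w \<sigma> i = infsum (\<lambda>p. walk_prob w p *\<^sub>R walk_prod \<sigma> p) (first_return_walks w i)"

definition pos_def :: "real^'d::finite^'d \<Rightarrow> bool" where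
  "pos_def A \<longleftrightarrow> (\<forall>x. x \<noteq> 0 \<longrightarrow> x \<bullet> (A *v x) > 0)"

end

theory Submission
  imports Defs
begin

text \<open>The connection Laplacian satisfies
  \<open>f \<bullet> L f = (\<Sum>a b. w a b * \<parallel>f a - \<sigma> a b f b\<parallel>\<^sup>2) / 2\<close>, so its kernel consists of the
  parallel sections, \<open>f a = \<sigma> a b f b\<close> along every edge. The random walk on a finite connected
  graph is recurrent, so the first-return trajectories at \<open>i\<close> carry total probability 1, and since
  every holonomy \<open>\<sigma>\<^sub>\<gamma>\<close> is orthogonal,
  \<open>x \<bullet> (I - \<Omega>\<^sub>i) x = (\<Sum>\<gamma>. P \<gamma> * \<parallel>x - \<sigma>\<^sub>\<gamma> x\<parallel>\<^sup>2) / 2\<close>. Hence \<open>I - \<Omega>\<^sub>i\<close> fails to be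
  positive definite iff some \<open>x \<noteq> 0\<close> is fixed by all first-return holonomies. As every closed
  walk at \<open>i\<close> is a concatenation of first returns, such an \<open>x\<close> is fixed by all closed walks at
  \<open>i\<close>, and transporting it along walks gives a parallel section with value \<open>x\<close> at \<open>i\<close>; conversely
  a nonzero parallel section vanishes nowhere.\<close>

lemma norm_orthogonal_matrix_vector:
  fixes Q :: "real^'n^'n"
  assumes "orthogonal_matrix Q"
  shows "norm (Q *v x) = norm x"
proof -
  have "(Q *v x) \<bullet> (Q *v x) = (x v* transpose Q) \<bullet> (Q *v x)"
    by (metis transpose_matrix_vector transpose_transpose)
  also have "\<dots> = x \<bullet> ((transpose Q ** Q) *v x)"
    by (simp only: dot_lmul_matrix matrix_vector_mul_assoc)
  finally show ?thesis
    using assms by (simp add: norm_eq_sqrt_inner orthogonal_matrix)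
qed

lemma inner_orthogonal_matrix_vector:
  fixes Q :: "real^'n^'n"
  assumes "orthogonal_matrix Q"
  shows "x \<bullet> (Q *v x) = (norm x)\<^sup>2 - (norm (x - Q *v x))\<^sup>2 / 2"
proof -
  have "(Q *v x) \<bullet> (Q *v x) = x \<bullet> x"
    by (metis norm_orthogonal_matrix_vector[OF assms] power2_norm_eq_inner)
  then show ?thesis
    by (simp add: power2_norm_eq_inner inner_diff_left inner_diff_right inner_commute field_simps)
qed

lemma norm_orthogonal_matrix:
  fixes Q :: "real^'n^'n"
  assumes "orthogonal_matrix Q"
  shows "norm Q = sqrt CARD('n)"
proof -
  have "norm (Q $ k) = 1" for k
    using assms unfolding orthogonal_matrix_orthonormal_rows row_def by (metis vec_lambda_eta)
  then show ?thesis by (simp add: norm_vec_def L2_set_def)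
qed

lemma bounded_linear_quadratic_form: "bounded_linear (\<lambda>M :: real^'n^'n. x \<bullet> (M *v x))"
proof (intro linear_conv_bounded_linear[THEN iffD1] linearI)
  show "x \<bullet> ((A + B) *v x) = x \<bullet> (A *v x) + x \<bullet> (B *v x)" for A B :: "real^'n^'n"
    by (simp add: matrix_vector_mult_add_rdistrib inner_add_right)
  show "x \<bullet> ((c *\<^sub>R A) *v x) = c *\<^sub>R (x \<bullet> (A *v x))" for c and A :: "real^'n^'n"
    by (simp only: scaleR_matrix_vector_assoc[symmetric] inner_scaleR_right) simp
qed

lemma nonneg_has_sum_UNION:
  fixes f :: "'b \<Rightarrow> real"
  assumes parts: "\<And>x. x \<in> A \<Longrightarrow> (f has_sum g x) (B x)"
    and total: "(g has_sum s) A"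
    and nonneg: "\<And>x y. x \<in> A \<Longrightarrow> y \<in> B x \<Longrightarrow> f y \<ge> 0"
    and disjoint: "disjoint_family_on B A"
  shows "(f has_sum s) (\<Union>x\<in>A. B x)"
proof -
  have "(f \<circ> snd) summable_on Sigma A B"
    using parts total nonneg by (intro summable_on_SigmaI[where g = g]) (auto simp: summable_on_def)
  then have "((f \<circ> snd) has_sum s) (Sigma A B)"
    using parts total by (intro has_sum_SigmaI[where g = g]) auto
  moreover have "inj_on snd (Sigma A B)"
    using disjoint by (force simp: disjoint_family_on_def inj_on_def)
  moreover have "snd ` Sigma A B = (\<Union>x\<in>A. B x)"
    by force
  ultimately show ?thesis
    using has_sum_reindex by metis
qed

abbreviation walk :: "('v \<Rightarrow> 'v \<Rightarrow> real) \<Rightarrow> 'v list \<Rightarrow> bool" where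
  "walk w \<equiv> successively (\<lambda>a b. w a b > 0)"

lemma walk_append:
  assumes "walk w xs" and "walk w (y # ys)" and "xs \<noteq> []" and "last xs = y"
  shows "walk w (xs @ ys)"
  using assms by (auto simp: successively_append_iff successively_Cons)

lemma walk_prod_append:
  assumes "xs \<noteq> []" and "last xs = y"
  shows "walk_prod \<sigma> (xs @ ys) = walk_prod \<sigma> xs ** walk_prod \<sigma> (y # ys)"
  using assms by (induction xs rule: induct_list012) (auto simp: matrix_mul_assoc)

lemma orthogonal_matrix_walk_prod:
  assumes "\<And>a b. w a b > 0 \<Longrightarrow> orthogonal_matrix (\<sigma> a b)" and "walk w p"
  shows "orthogonal_matrix (walk_prod \<sigma> p)"
  using assms(2)
  by (induction p rule: induct_list012) (auto simp: assms(1) orthogonal_matrix_mul orthogonal_matrix_id)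

lemma walk_prob_Cons:
  "t \<noteq> [] \<Longrightarrow> walk_prob w (a # t) = w a (hd t) / vdeg w a * walk_prob w t"
  by (cases t) auto

lemma walk_prob_nonneg: "(\<And>a b. w a b \<ge> 0) \<Longrightarrow> walk_prob w p \<ge> 0"
  by (induction p rule: induct_list012) (auto simp: vdeg_def sum_nonneg)

lemma first_return_walks_altdef:
  "first_return_walks w i = {i # t | t. t \<noteq> [] \<and> last t = i \<and> i \<notin> set (butlast t) \<and> walk w (i # t)}"
proof -
  have avoid: "(\<forall>l. 0 < l \<and> l < length t \<longrightarrow> (i # t) ! l \<noteq> i) \<longleftrightarrow> i \<notin> set (butlast t)" for t
  proof -
    have "(\<forall>l. 0 < l \<and> l < length t \<longrightarrow> (i # t) ! l \<noteq> i) \<longleftrightarrow> (\<forall>k. Suc k < length t \<longrightarrow> t ! k \<noteq> i)"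
      by (auto simp: gr0_conv_Suc)
    also have "\<dots> \<longleftrightarrow> i \<notin> set (butlast t)"
      by (auto simp: in_set_conv_nth nth_butlast less_diff_conv)
    finally show ?thesis .
  qed
  have frw: "p \<in> first_return_walks w i \<longleftrightarrow> 2 \<le> length p \<and> hd p = i \<and> last p = i \<and>
      (\<forall>l. 0 < l \<and> l < length p - 1 \<longrightarrow> p ! l \<noteq> i) \<and> walk w p" for p
    by (simp add: first_return_walks_def successively_conv_nth)
  have "p \<in> first_return_walks w i \<longleftrightarrow>
      (\<exists>t. p = i # t \<and> t \<noteq> [] \<and> last t = i \<and> i \<notin> set (butlast t) \<and> walk w (i # t))" for p
  proof (cases p)
    case (Cons x t)
    then have "p \<in> first_return_walks w i \<longleftrightarrow> x = i \<and> t \<noteq> [] \<and> last t = i \<and>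
        (\<forall>l. 0 < l \<and> l < length t \<longrightarrow> (i # t) ! l \<noteq> i) \<and> walk w (i # t)"
      unfolding frw by (auto simp: Suc_le_eq)
    then show ?thesis
      using Cons avoid by auto
  qed (simp add: frw)
  then show ?thesis
    by blast
qed

lemma walk_first_return_walks: "\<gamma> \<in> first_return_walks w i \<Longrightarrow> walk w \<gamma>"
  by (auto simp: first_return_walks_altdef)

definition first_hit_walks :: "('v \<Rightarrow> 'v \<Rightarrow> real) \<Rightarrow> 'v \<Rightarrow> nat \<Rightarrow> 'v \<Rightarrow> 'v list set" where
  "first_hit_walks w i m a =
     {a # t | t. length t = Suc m \<and> last t = i \<and> i \<notin> set (butlast t) \<and> walk w (a # t)}"

lemma first_return_walks_eq_Union: "first_return_walks w i = (\<Union>m. first_hit_walks w i m i)"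
proof -
  have "t \<noteq> [] \<longleftrightarrow> (\<exists>m. length t = Suc m)" for t :: "'a list"
    by (cases t) auto
  then show ?thesis
    unfolding first_return_walks_altdef first_hit_walks_def by blast
qed

lemma first_hit_walks_0: "first_hit_walks w i 0 a = (if w a i > 0 then {[a, i]} else {})"
  by (auto simp: first_hit_walks_def length_Suc_conv)

lemma first_hit_walks_Suc:
  "first_hit_walks w i (Suc m) a = (\<Union>b\<in>{b. b \<noteq> i \<and> w a b > 0}. Cons a ` first_hit_walks w i m b)"
proof -
  have step: "a # b # t \<in> first_hit_walks w i (Suc m) a \<longleftrightarrow>
      b \<noteq> i \<and> w a b > 0 \<and> b # t \<in> first_hit_walks w i m b" for b t
  proof -
    have "a # b # t \<in> first_hit_walks w i (Suc m) a \<longleftrightarrow> length t = Suc m \<and> last (b # t) = i \<and>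
        i \<notin> set (butlast (b # t)) \<and> w a b > 0 \<and> walk w (b # t)"
      unfolding first_hit_walks_def by (simp del: last.simps butlast.simps)
    moreover have "b # t \<in> first_hit_walks w i m b \<longleftrightarrow> length t = Suc m \<and> last t = i \<and>
        i \<notin> set (butlast t) \<and> walk w (b # t)"
      unfolding first_hit_walks_def by (simp del: last.simps butlast.simps)
    ultimately show ?thesis
      by (cases "t = []") (simp_all, blast)
  qed
  show ?thesis
  proof (intro set_eqI iffI)
    fix \<gamma> assume \<gamma>: "\<gamma> \<in> first_hit_walks w i (Suc m) a"
    then obtain b t where "\<gamma> = a # b # t"
      by (auto simp: first_hit_walks_def length_Suc_conv)
    with \<gamma> step show "\<gamma> \<in> (\<Union>b\<in>{b. b \<noteq> i \<and> w a b > 0}. Cons a ` first_hit_walks w i m b)"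
      by blast
  next
    fix \<gamma> assume "\<gamma> \<in> (\<Union>b\<in>{b. b \<noteq> i \<and> w a b > 0}. Cons a ` first_hit_walks w i m b)"
    then obtain b t where b: "b \<noteq> i" "w a b > 0" and t: "b # t \<in> first_hit_walks w i m b"
      and \<gamma>: "\<gamma> = a # b # t"
      by (auto simp: first_hit_walks_def)
    show "\<gamma> \<in> first_hit_walks w i (Suc m) a"
      unfolding \<gamma> step using b t by blast
  qed
qed

lemma finite_first_hit_walks: "finite (first_hit_walks w i m (a :: 'v::finite))"
  by (rule finite_subset[OF _ finite_lists_length_eq[of UNIV "m + 2"]]) (auto simp: first_hit_walks_def)

text \<open>In the paper's terms, \<open>\<sigma>\<close> is absolutely inconsistent iff the zero section is the only
  parallel one.\<close>

definition parallel_section ::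
  "('v \<Rightarrow> 'v \<Rightarrow> real) \<Rightarrow> ('v \<Rightarrow> 'v \<Rightarrow> real^'d::finite^'d) \<Rightarrow> ('v \<Rightarrow> real^'d) \<Rightarrow> bool" where
  "parallel_section w \<sigma> F \<longleftrightarrow> (\<forall>a b. w a b > 0 \<longrightarrow> F a = \<sigma> a b *v F b)"

lemma parallel_section_walk:
  assumes "parallel_section w \<sigma> F" and "walk w (a # p)"
  shows "F a = walk_prod \<sigma> (a # p) *v F (last (a # p))"
  using assms(2)
proof (induction p arbitrary: a)
  case (Cons b p)
  have "walk w (b # p)" and "w a b > 0"
    using Cons.prems by simp_all
  have "F a = \<sigma> a b *v F b"
    using assms(1) \<open>w a b > 0\<close> by (simp add: parallel_section_def)
  also have "\<dots> = \<sigma> a b *v (walk_prod \<sigma> (b # p) *v F (last (b # p)))"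
    using Cons.IH[OF \<open>walk w (b # p)\<close>] by (rule arg_cong)
  also have "\<dots> = walk_prod \<sigma> (a # b # p) *v F (last (a # b # p))"
    by (simp add: matrix_vector_mul_assoc)
  finally show ?case .
qed simp

lemma closed_walk_fixes_vector:
  assumes fixed: "\<forall>\<gamma>\<in>first_return_walks w i. walk_prod \<sigma> \<gamma> *v x = x"
    and "walk w (i # r)" and "last (i # r) = i"
  shows "walk_prod \<sigma> (i # r) *v x = x"
  using assms(2,3)
proof (induction "length r" arbitrary: r rule: less_induct)
  case less
  show ?case
  proof (cases "i \<in> set r")
    case True
    then obtain ys zs where r: "r = ys @ i # zs" and ys: "i \<notin> set ys"
      using split_list_first[OF True] by blast
    have "walk w ((i # ys) @ i # zs)"
      using less.prems(1) by (simp add: r)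
    then have "walk w ((i # ys) @ [i])" "walk w (i # zs)"
      unfolding successively_append_iff by simp_all
    then have walks: "walk w (i # ys @ [i])" "walk w (i # zs)"
      by simp_all
    then have "i # ys @ [i] \<in> first_return_walks w i"
      using ys by (simp add: first_return_walks_altdef)
    with fixed have "walk_prod \<sigma> (i # ys @ [i]) *v x = x"
      by (rule bspec)
    moreover have "walk_prod \<sigma> (i # zs) *v x = x"
      using less.hyps[of zs] less.prems(2) walks(2) by (simp add: r)
    moreover have "walk_prod \<sigma> (i # r) = walk_prod \<sigma> (i # ys @ [i]) ** walk_prod \<sigma> (i # zs)"
      using walk_prod_append[of "i # ys @ [i]" i \<sigma> zs] by (simp add: r)
    ultimately show ?thesis
      by (simp flip: matrix_vector_mul_assoc)
  next
    case False
    then show ?thesis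
      using less.prems(2) last_in_set[of r] by (cases "r = []") auto
  qed
qed

definition vertex_block :: "real^('v::finite \<times> 'd::finite) \<Rightarrow> 'v \<Rightarrow> real^'d" where
  "vertex_block f a = (\<chi> k. f $ (a, k))"

lemma inner_vertex_blocks: "f \<bullet> g = (\<Sum>a\<in>UNIV. vertex_block f a \<bullet> vertex_block g a)"
  by (simp add: inner_vec_def vertex_block_def sum.cartesian_product' flip: UNIV_Times_UNIV)

lemma vertex_block_eq_0_iff: "(\<forall>a. vertex_block f a = 0) \<longleftrightarrow> f = 0"
  by (auto simp: vertex_block_def vec_eq_iff)

lemma vertex_block_surj: "vertex_block (\<chi> p. F (fst p) $ snd p) = F"
  by (simp add: vertex_block_def fun_eq_iff vec_eq_iff)

locale orthogonal_connection =
  fixes w :: "'v::finite \<Rightarrow> 'v \<Rightarrow> real" and \<sigma> :: "'v \<Rightarrow> 'v \<Rightarrow> real^'d::finite^'d"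
  assumes nonneg: "w a b \<ge> 0"
    and symmetric: "w a b = w b a"
    and loopless: "w a a = 0"
    and orthogonal: "w a b > 0 \<Longrightarrow> orthogonal_matrix (\<sigma> a b)"
begin

lemma conn_laplacian_entry:
  "conn_laplacian w \<sigma> $ p $ q
     = (if p = q then vdeg w (fst p) else 0) - w (fst p) (fst q) * (\<sigma> (fst p) (fst q) $ snd p $ snd q)"
  using nonneg[of "fst p" "fst q"] by (auto simp: conn_laplacian_def loopless prod_eq_iff)

lemma vertex_block_conn_laplacian:
  "vertex_block (conn_laplacian w \<sigma> *v f) a
     = vdeg w a *\<^sub>R vertex_block f a - (\<Sum>b\<in>UNIV. w a b *\<^sub>R (\<sigma> a b *v vertex_block f b))"
  by (simp add: vec_eq_iff vertex_block_def matrix_vector_mult_def conn_laplacian_entry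
      left_diff_distrib sum_subtractf if_distrib[of "\<lambda>x. x * _"] cong: if_cong)
     (simp add: sum.cartesian_product' sum_distrib_left mult.assoc flip: UNIV_Times_UNIV)

lemma conn_laplacian_quadratic_form:
  "f \<bullet> (conn_laplacian w \<sigma> *v f)
     = (\<Sum>a\<in>UNIV. \<Sum>b\<in>UNIV. w a b * (norm (vertex_block f a - \<sigma> a b *v vertex_block f b))\<^sup>2) / 2"
proof -
  define F where "F = vertex_block f"
  have edge: "w a b * (norm (F a - \<sigma> a b *v F b))\<^sup>2
      = w a b * (norm (F a))\<^sup>2 + w a b * (norm (F b))\<^sup>2 - 2 * (w a b * (F a \<bullet> (\<sigma> a b *v F b)))" for a b
  proof (cases "w a b > 0")
    case True
    then have "(norm (\<sigma> a b *v F b))\<^sup>2 = (norm (F b))\<^sup>2"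
      by (simp add: norm_orthogonal_matrix_vector orthogonal)
    then show ?thesis
      by (simp add: power2_norm_eq_inner inner_diff_left inner_diff_right inner_commute algebra_simps)
  next
    case False
    then show ?thesis using nonneg[of a b] by simp
  qed
  have out_degree: "(\<Sum>a\<in>UNIV. \<Sum>b\<in>UNIV. w a b * (norm (F a))\<^sup>2) = (\<Sum>a\<in>UNIV. vdeg w a * (norm (F a))\<^sup>2)"
    by (simp add: vdeg_def sum_distrib_right)
  have in_degree: "(\<Sum>a\<in>UNIV. \<Sum>b\<in>UNIV. w a b * (norm (F b))\<^sup>2) = (\<Sum>a\<in>UNIV. vdeg w a * (norm (F a))\<^sup>2)"
    by (subst sum.swap) (simp add: vdeg_def sum_distrib_right symmetric)
  have "f \<bullet> (conn_laplacian w \<sigma> *v f)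
      = (\<Sum>a\<in>UNIV. vdeg w a * (norm (F a))\<^sup>2) - (\<Sum>a\<in>UNIV. \<Sum>b\<in>UNIV. w a b * (F a \<bullet> (\<sigma> a b *v F b)))"
    by (simp add: inner_vertex_blocks vertex_block_conn_laplacian F_def inner_diff_right inner_sum_right
        power2_norm_eq_inner sum_subtractf)
  also have "\<dots> = (\<Sum>a\<in>UNIV. \<Sum>b\<in>UNIV. w a b * (norm (F a - \<sigma> a b *v F b))\<^sup>2) / 2"
    unfolding edge by (simp add: sum.distrib sum_subtractf out_degree in_degree sum_distrib_left
        flip: sum_distrib_left)
  finally show ?thesis unfolding F_def .
qed

lemma conn_laplacian_kernel_iff:
  "conn_laplacian w \<sigma> *v f = 0 \<longleftrightarrow> parallel_section w \<sigma> (vertex_block f)"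
proof
  assume "conn_laplacian w \<sigma> *v f = 0"
  then have "(\<Sum>a\<in>UNIV. \<Sum>b\<in>UNIV. w a b * (norm (vertex_block f a - \<sigma> a b *v vertex_block f b))\<^sup>2) = 0"
    using conn_laplacian_quadratic_form[of f] by simp
  then have "w a b * (norm (vertex_block f a - \<sigma> a b *v vertex_block f b))\<^sup>2 = 0" for a b
    by (simp add: sum_nonneg_eq_0_iff sum_nonneg nonneg)
  then show "parallel_section w \<sigma> (vertex_block f)"
    unfolding parallel_section_def
    by (metis less_irrefl mult_eq_0_iff norm_eq_zero power_eq_0_iff right_minus_eq)
next
  assume parallel: "parallel_section w \<sigma> (vertex_block f)"
  have edge: "w a b *\<^sub>R (\<sigma> a b *v vertex_block f b) = w a b *\<^sub>R vertex_block f a" for a b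
    using parallel nonneg[of a b] by (cases "w a b > 0") (auto simp: parallel_section_def)
  have "vertex_block (conn_laplacian w \<sigma> *v f) a = 0" for a
    unfolding vertex_block_conn_laplacian vdeg_def scaleR_sum_left edge by simp
  then show "conn_laplacian w \<sigma> *v f = 0"
    using vertex_block_eq_0_iff by blast
qed

lemma invertible_conn_laplacian_iff:
  "invertible (conn_laplacian w \<sigma>) \<longleftrightarrow> (\<forall>F. parallel_section w \<sigma> F \<longrightarrow> (\<forall>a. F a = 0))"
proof -
  have "invertible (conn_laplacian w \<sigma>) \<longleftrightarrow> (\<forall>f. parallel_section w \<sigma> (vertex_block f) \<longrightarrow> f = 0)"
    by (simp add: invertible_left_inverse matrix_left_invertible_ker conn_laplacian_kernel_iff)
  also have "\<dots> \<longleftrightarrow> (\<forall>F. parallel_section w \<sigma> F \<longrightarrow> (\<forall>a. F a = 0))"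
    by (metis vertex_block_eq_0_iff vertex_block_surj)
  finally show ?thesis .
qed

end

text \<open>\<open>avoid_prob w i m a\<close> is the probability that the walk started at \<open>a\<close> does not visit \<open>i\<close>
  at the times \<open>1, \<dots>, m\<close>.\<close>

fun avoid_prob :: "('v::finite \<Rightarrow> 'v \<Rightarrow> real) \<Rightarrow> 'v \<Rightarrow> nat \<Rightarrow> 'v \<Rightarrow> real" where
  "avoid_prob w i 0 a = 1"
| "avoid_prob w i (Suc m) a = (\<Sum>b\<in>-{i}. w a b / vdeg w a * avoid_prob w i m b)"

declare avoid_prob.simps(2) [simp del]

locale irreducible_walk =
  fixes w :: "'v::finite \<Rightarrow> 'v \<Rightarrow> real"
  assumes nonneg: "w a b \<ge> 0"
    and strongly_connected: "(a, b) \<in> {(a, b). w a b > 0}\<^sup>*"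
    and two_vertices: "CARD('v) \<ge> 2"
begin

lemma exists_walk: "\<exists>p. walk w (a # p) \<and> last (a # p) = b"
  using strongly_connected[of a b]
proof (induction rule: rtrancl_induct)
  case base
  show ?case by (rule exI[of _ "[]"]) simp
next
  case (step y z)
  then obtain p where "walk w (a # p)" "last (a # p) = y"
    by blast
  with step show ?case
    using walk_append[of w "a # p" y "[z]"] by (intro exI[of _ "p @ [z]"]) simp
qed

lemma exists_other_vertex: "\<exists>b. b \<noteq> (a :: 'v)"
proof (rule ccontr)
  assume "\<nexists>b. b \<noteq> a"
  then have "CARD('v) = card {a}"
    by (metis UNIV_eq_I singletonI)
  then show False
    using two_vertices by simp
qed

lemma exists_out_edge: "\<exists>b. w a b > 0"
proof -
  obtain c where "c \<noteq> a" using exists_other_vertex by blast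
  with strongly_connected[of a c] show ?thesis
    by (cases rule: converse_rtranclE) auto
qed

lemma exists_in_edge: "\<exists>a. w a b > 0"
proof -
  obtain c where "c \<noteq> b" using exists_other_vertex by blast
  with strongly_connected[of c b] show ?thesis
    by (cases rule: rtranclE) auto
qed

lemma vdeg_pos: "vdeg w a > 0"
proof -
  obtain b where "w a b > 0" using exists_out_edge by blast
  moreover have "w a b \<le> vdeg w a"
    unfolding vdeg_def by (rule member_le_sum) (auto simp: nonneg)
  ultimately show ?thesis by simp
qed

lemma sum_transition_prob: "(\<Sum>b\<in>UNIV. w a b / vdeg w a) = 1"
  using vdeg_pos[of a] by (simp add: vdeg_def flip: sum_divide_distrib)

lemma transition_prob_nonneg: "w a b / vdeg w a \<ge> 0"
  using vdeg_pos[of a] nonneg[of a b] by simp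

lemma walk_prob_pos: "walk w p \<Longrightarrow> walk_prob w p > 0"
  by (induction p rule: induct_list012) (auto simp: vdeg_pos)

lemma sum_walk_prob_first_hit_walks:
  "(\<Sum>\<gamma>\<in>first_hit_walks w i m a. walk_prob w \<gamma>) = avoid_prob w i m a - avoid_prob w i (Suc m) a"
proof (induction m arbitrary: a)
  case 0
  have "avoid_prob w i 1 a = 1 - w a i / vdeg w a"
    using sum_transition_prob[of a] by (simp add: avoid_prob.simps Compl_eq_Diff_UNIV sum_diff1)
  then show ?case
    using nonneg[of a i] by (simp add: first_hit_walks_0)
next
  case (Suc m)
  let ?B = "{b. b \<noteq> i \<and> w a b > 0}"
  have starts: "t \<noteq> [] \<and> hd t = b" if "t \<in> first_hit_walks w i m b" for t b
    using that by (auto simp: first_hit_walks_def)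
  have "(\<Sum>\<gamma>\<in>first_hit_walks w i (Suc m) a. walk_prob w \<gamma>)
      = (\<Sum>b\<in>?B. \<Sum>t\<in>first_hit_walks w i m b. walk_prob w (a # t))"
    unfolding first_hit_walks_Suc
    by (subst sum.UNION_disjoint) (auto simp: finite_first_hit_walks sum.reindex dest!: starts)
  also have "\<dots> = (\<Sum>b\<in>?B. w a b / vdeg w a * (avoid_prob w i m b - avoid_prob w i (Suc m) b))"
  proof (rule sum.cong[OF refl])
    fix b
    have "(\<Sum>t\<in>first_hit_walks w i m b. walk_prob w (a # t))
        = (\<Sum>t\<in>first_hit_walks w i m b. w a b / vdeg w a * walk_prob w t)"
      by (rule sum.cong) (auto simp: walk_prob_Cons dest: starts)
    also have "\<dots> = w a b / vdeg w a * (avoid_prob w i m b - avoid_prob w i (Suc m) b)"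
      by (simp only: Suc.IH flip: sum_distrib_left)
    finally show "(\<Sum>t\<in>first_hit_walks w i m b. walk_prob w (a # t))
        = w a b / vdeg w a * (avoid_prob w i m b - avoid_prob w i (Suc m) b)" .
  qed
  also have "\<dots> = (\<Sum>b\<in>-{i}. w a b / vdeg w a * (avoid_prob w i m b - avoid_prob w i (Suc m) b))"
  proof (rule sum.mono_neutral_left)
    show "\<forall>b\<in>-{i} - ?B. w a b / vdeg w a * (avoid_prob w i m b - avoid_prob w i (Suc m) b) = 0"
      using nonneg[of a] by (auto simp: order.strict_iff_order)
  qed auto
  also have "\<dots> = avoid_prob w i (Suc m) a - avoid_prob w i (Suc (Suc m)) a"
    by (simp add: avoid_prob.simps right_diff_distrib sum_subtractf)
  finally show ?case .
qed

lemma avoid_prob_nonneg: "avoid_prob w i m a \<ge> 0"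
proof (induction m arbitrary: a)
  case (Suc m)
  show ?case
    unfolding avoid_prob.simps by (intro sum_nonneg mult_nonneg_nonneg transition_prob_nonneg Suc.IH)
qed simp

lemma avoid_prob_Suc_le: "avoid_prob w i (Suc m) a \<le> avoid_prob w i m a"
proof -
  have "0 \<le> (\<Sum>\<gamma>\<in>first_hit_walks w i m a. walk_prob w \<gamma>)"
    by (intro sum_nonneg walk_prob_nonneg nonneg)
  then show ?thesis
    by (simp only: sum_walk_prob_first_hit_walks diff_ge_0_iff_ge)
qed

text \<open>Maximum principle for the random walk killed on reaching \<open>i\<close>.\<close>

lemma killed_fixed_point_max_propagates:
  assumes fixed: "\<And>a. H a = (\<Sum>b\<in>-{i}. w a b / vdeg w a * H b)"
    and le_M: "\<And>b. H b \<le> M" and M_pos: "M > 0"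
    and c: "H c = M" and cb: "w c b > 0"
  shows "H b = M \<and> b \<noteq> i"
proof -
  define H' where "H' b = (if b = i then 0 else H b)" for b
  have "(\<Sum>b\<in>UNIV. w c b / vdeg w c * H' b) = H c"
    using fixed[of c] by (simp add: H'_def if_distrib[of "\<lambda>x. _ * x"] sum.If_cases Compl_eq_Diff_UNIV)
  moreover have "(\<Sum>b\<in>UNIV. w c b / vdeg w c * M) = M"
    by (simp only: sum_transition_prob mult_1 flip: sum_distrib_right)
  ultimately have "(\<Sum>b\<in>UNIV. w c b / vdeg w c * (M - H' b)) = M - H c"
    by (simp add: right_diff_distrib sum_subtractf)
  then have "(\<Sum>b\<in>UNIV. w c b / vdeg w c * (M - H' b)) = 0"
    using c by simp
  moreover have "w c b / vdeg w c * (M - H' b) \<ge> 0" for b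
    using le_M[of b] M_pos by (intro mult_nonneg_nonneg transition_prob_nonneg) (simp add: H'_def)
  ultimately have "w c b / vdeg w c * (M - H' b) = 0"
    by (simp add: sum_nonneg_eq_0_iff)
  then have "H' b = M"
    using cb vdeg_pos[of c] by simp
  then show ?thesis
    using M_pos by (auto simp: H'_def split: if_splits)
qed

lemma killed_fixed_point_le_0:
  assumes fixed: "\<And>a. H a = (\<Sum>b\<in>-{i}. w a b / vdeg w a * H b)"
  shows "H a \<le> 0"
proof (rule ccontr)
  define M where "M = Max (range H)"
  have le_M: "H b \<le> M" for b
    unfolding M_def by simp
  have "M \<in> range H"
    unfolding M_def by (rule Max_in) auto
  then obtain a0 where a0: "H a0 = M"
    by blast
  assume "\<not> H a \<le> 0"
  then have M_pos: "M > 0"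
    using le_M[of a] by simp
  note propagate = killed_fixed_point_max_propagates[OF fixed le_M M_pos]
  have "H b = M" for b
    using strongly_connected[of a0 b]
  proof (induction rule: rtrancl_induct)
    case base
    show ?case using a0 .
  next
    case (step b c)
    then show ?case using propagate by blast
  qed
  moreover obtain c where "w c i > 0"
    using exists_in_edge by blast
  ultimately show False
    using propagate by blast
qed

lemma killed_fixed_point_eq_0:
  assumes fixed: "\<And>a. H a = (\<Sum>b\<in>-{i}. w a b / vdeg w a * H b)"
  shows "H a = 0"
proof -
  have "- H a = (\<Sum>b\<in>-{i}. w a b / vdeg w a * - H b)" for a
    by (subst fixed) (simp add: sum_negf)
  then have "- H a \<le> 0"
    by (rule killed_fixed_point_le_0)
  with killed_fixed_point_le_0[OF fixed, of a] show ?thesis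
    by simp
qed

lemma avoid_prob_tendsto_0: "(\<lambda>m. avoid_prob w i m a) \<longlonglongrightarrow> 0"
proof -
  have "\<exists>L. (\<lambda>m. avoid_prob w i m a) \<longlonglongrightarrow> L" for a
  proof -
    have "decseq (\<lambda>m. avoid_prob w i m a)"
      by (rule decseq_SucI) (rule avoid_prob_Suc_le)
    then show ?thesis
      by (rule decseq_convergent[where B = 0]) (auto simp: avoid_prob_nonneg)
  qed
  then obtain H where lim: "\<And>a. (\<lambda>m. avoid_prob w i m a) \<longlonglongrightarrow> H a"
    by metis
  have "H a = (\<Sum>b\<in>-{i}. w a b / vdeg w a * H b)" for a
  proof (rule LIMSEQ_unique)
    show "(\<lambda>m. avoid_prob w i (Suc m) a) \<longlonglongrightarrow> H a"
      using lim by (rule LIMSEQ_Suc)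
    show "(\<lambda>m. avoid_prob w i (Suc m) a) \<longlonglongrightarrow> (\<Sum>b\<in>-{i}. w a b / vdeg w a * H b)"
      unfolding avoid_prob.simps by (intro tendsto_intros lim)
  qed
  then have "H a = 0" for a
    by (rule killed_fixed_point_eq_0)
  then show ?thesis
    using lim[of a] by simp
qed

lemma has_sum_walk_prob_first_return_walks: "(walk_prob w has_sum 1) (first_return_walks w i)"
proof -
  let ?p = "\<lambda>m. avoid_prob w i m i - avoid_prob w i (Suc m) i"
  have "?p sums (avoid_prob w i 0 i - 0)"
    by (rule telescope_sums'[OF avoid_prob_tendsto_0])
  then have "(?p has_sum 1) UNIV"
    by (intro sums_nonneg_imp_has_sum) (simp_all add: avoid_prob_Suc_le)
  moreover have "(walk_prob w has_sum ?p m) (first_hit_walks w i m i)" for m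
    using has_sum_finite[OF finite_first_hit_walks] by (simp flip: sum_walk_prob_first_hit_walks)
  moreover have "disjoint_family (\<lambda>m. first_hit_walks w i m i)"
    by (auto simp: disjoint_family_on_def first_hit_walks_def)
  ultimately show ?thesis
    unfolding first_return_walks_eq_Union
    by (intro nonneg_has_sum_UNION[where g = ?p]) (auto intro: walk_prob_nonneg nonneg)
qed

end

locale irreducible_connection = orthogonal_connection w \<sigma> + irreducible_walk w
  for w :: "'v::finite \<Rightarrow> 'v \<Rightarrow> real" and \<sigma> :: "'v \<Rightarrow> 'v \<Rightarrow> real^'d::finite^'d"
begin

lemma orthogonal_matrix_walk: "walk w p \<Longrightarrow> orthogonal_matrix (walk_prod \<sigma> p)"
  by (rule orthogonal_matrix_walk_prod[OF orthogonal])

lemma has_sum_Omega1: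
  "((\<lambda>\<gamma>. walk_prob w \<gamma> *\<^sub>R walk_prod \<sigma> \<gamma>) has_sum Omega1 w \<sigma> i) (first_return_walks w i)"
proof -
  have norm_eq: "norm (walk_prob w \<gamma> *\<^sub>R walk_prod \<sigma> \<gamma>) = walk_prob w \<gamma> * sqrt CARD('d)"
    if "\<gamma> \<in> first_return_walks w i" for \<gamma>
  proof -
    have "orthogonal_matrix (walk_prod \<sigma> \<gamma>)"
      by (rule orthogonal_matrix_walk[OF walk_first_return_walks[OF that]])
    moreover have "walk_prob w \<gamma> \<ge> 0"
      by (rule walk_prob_nonneg[of w, OF nonneg])
    ultimately show ?thesis
      by (simp add: norm_orthogonal_matrix)
  qed
  have "((\<lambda>\<gamma>. walk_prob w \<gamma> * sqrt CARD('d)) has_sum (1 * sqrt CARD('d))) (first_return_walks w i)"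
    by (rule has_sum_cmult_left[OF has_sum_walk_prob_first_return_walks])
  then have "(\<lambda>\<gamma>. norm (walk_prob w \<gamma> *\<^sub>R walk_prod \<sigma> \<gamma>)) summable_on first_return_walks w i"
    by (rule summable_on_cong[THEN iffD1, rotated, OF has_sum_imp_summable]) (rule norm_eq[symmetric])
  then show ?thesis
    unfolding Omega1_def by (intro has_sum_infsum) (rule abs_summable_summable)
qed

lemma has_sum_quadratic_form_Omega1:
  "((\<lambda>\<gamma>. walk_prob w \<gamma> * (norm (x - walk_prod \<sigma> \<gamma> *v x))\<^sup>2 / 2)
      has_sum (x \<bullet> ((mat 1 - Omega1 w \<sigma> i) *v x))) (first_return_walks w i)"
proof -
  from has_sum_bounded_linear[OF bounded_linear_quadratic_form has_sum_Omega1]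
  have "((\<lambda>\<gamma>. walk_prob w \<gamma> * (x \<bullet> (walk_prod \<sigma> \<gamma> *v x))) has_sum (x \<bullet> (Omega1 w \<sigma> i *v x)))
      (first_return_walks w i)"
    by (simp only: scaleR_matrix_vector_assoc[symmetric] inner_scaleR_right)
  then have sum: "((\<lambda>\<gamma>. walk_prob w \<gamma> * (x \<bullet> x) + - (walk_prob w \<gamma> * (x \<bullet> (walk_prod \<sigma> \<gamma> *v x))))
      has_sum (1 * (x \<bullet> x) + - (x \<bullet> (Omega1 w \<sigma> i *v x)))) (first_return_walks w i)"
    by (intro has_sum_add has_sum_cmult_left has_sum_walk_prob_first_return_walks)
      (simp add: has_sum_uminus)
  have total: "1 * (x \<bullet> x) + - (x \<bullet> (Omega1 w \<sigma> i *v x)) = x \<bullet> ((mat 1 - Omega1 w \<sigma> i) *v x)"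
    by (simp add: matrix_vector_mult_diff_rdistrib inner_diff_right)
  from sum show ?thesis
    unfolding total
  proof (rule has_sum_cong[THEN iffD1, rotated])
    fix \<gamma> assume "\<gamma> \<in> first_return_walks w i"
    then have "orthogonal_matrix (walk_prod \<sigma> \<gamma>)"
      by (simp add: orthogonal_matrix_walk walk_first_return_walks)
    then have "x \<bullet> x - x \<bullet> (walk_prod \<sigma> \<gamma> *v x) = (norm (x - walk_prod \<sigma> \<gamma> *v x))\<^sup>2 / 2"
      by (simp add: inner_orthogonal_matrix_vector dot_square_norm)
    then show "walk_prob w \<gamma> * (x \<bullet> x) + - (walk_prob w \<gamma> * (x \<bullet> (walk_prod \<sigma> \<gamma> *v x)))
        = walk_prob w \<gamma> * (norm (x - walk_prod \<sigma> \<gamma> *v x))\<^sup>2 / 2"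
      by (metis ab_group_add_class.ab_diff_conv_add_uminus right_diff_distrib times_divide_eq_right)
  qed
qed

lemma quadratic_form_Omega1_eq_0_iff:
  "x \<bullet> ((mat 1 - Omega1 w \<sigma> i) *v x) = 0 \<longleftrightarrow> (\<forall>\<gamma>\<in>first_return_walks w i. walk_prod \<sigma> \<gamma> *v x = x)"
proof
  assume zero: "x \<bullet> ((mat 1 - Omega1 w \<sigma> i) *v x) = 0"
  have "walk_prob w \<gamma> * (norm (x - walk_prod \<sigma> \<gamma> *v x))\<^sup>2 / 2 = 0"
    if "\<gamma> \<in> first_return_walks w i" for \<gamma>
    by (rule nonneg_has_sum_le_0D[OF has_sum_quadratic_form_Omega1])
      (use zero that walk_prob_nonneg[of w, OF nonneg] in simp_all)
  moreover have "walk_prob w \<gamma> > 0" if "\<gamma> \<in> first_return_walks w i" for \<gamma>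
    by (rule walk_prob_pos[OF walk_first_return_walks[OF that]])
  ultimately show "\<forall>\<gamma>\<in>first_return_walks w i. walk_prod \<sigma> \<gamma> *v x = x"
    by fastforce
next
  assume "\<forall>\<gamma>\<in>first_return_walks w i. walk_prod \<sigma> \<gamma> *v x = x"
  then have "((\<lambda>\<gamma>. walk_prob w \<gamma> * (norm (x - walk_prod \<sigma> \<gamma> *v x))\<^sup>2 / 2) has_sum 0) (first_return_walks w i)"
    by (intro has_sum_0) simp
  with has_sum_quadratic_form_Omega1 show "x \<bullet> ((mat 1 - Omega1 w \<sigma> i) *v x) = 0"
    by (rule has_sum_unique)
qed

lemma pos_def_iff_no_fixed_vector:
  "pos_def (mat 1 - Omega1 w \<sigma> i) \<longleftrightarrow>
     (\<forall>x. (\<forall>\<gamma>\<in>first_return_walks w i. walk_prod \<sigma> \<gamma> *v x = x) \<longrightarrow> x = 0)"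
proof -
  have "x \<bullet> ((mat 1 - Omega1 w \<sigma> i) *v x) \<ge> 0" for x
    by (rule has_sum_nonneg[OF has_sum_quadratic_form_Omega1]) (simp add: walk_prob_nonneg nonneg)
  then show ?thesis
    unfolding pos_def_def quadratic_form_Omega1_eq_0_iff[symmetric]
    by (metis order.not_eq_order_implies_strict order.strict_implies_not_eq)
qed

lemma transport_independent_of_walk:
  assumes fixed: "\<forall>\<gamma>\<in>first_return_walks w i. walk_prod \<sigma> \<gamma> *v x = x"
    and p: "walk w (a # p)" "last (a # p) = i"
    and q: "walk w (a # q)" "last (a # q) = i"
  shows "walk_prod \<sigma> (a # p) *v x = walk_prod \<sigma> (a # q) *v x"
proof -
  obtain r where r: "walk w (i # r)" "last (i # r) = a"
    using exists_walk by blast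
  have round_trip: "walk_prod \<sigma> (i # r) *v (walk_prod \<sigma> (a # s) *v x) = x"
    if "walk w (a # s)" "last (a # s) = i" for s
  proof -
    have "walk w ((i # r) @ s)"
      using walk_append[of w "i # r" a s] r that by simp
    moreover have "last ((i # r) @ s) = i"
      using r(2) that(2) by (cases s) auto
    ultimately have "walk_prod \<sigma> (i # r @ s) *v x = x"
      by (intro closed_walk_fixes_vector[OF fixed]) simp_all
    moreover have "walk_prod \<sigma> (i # r @ s) = walk_prod \<sigma> (i # r) ** walk_prod \<sigma> (a # s)"
      using walk_prod_append[of "i # r" a \<sigma> s] r(2) by simp
    ultimately show ?thesis
      by (simp add: matrix_vector_mul_assoc)
  qed
  have "orthogonal_matrix (walk_prod \<sigma> (i # r))"
    by (rule orthogonal_matrix_walk[OF r(1)])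
  with round_trip[OF p] round_trip[OF q] show ?thesis
    by (metis matrix_vector_mul_assoc matrix_vector_mul_lid orthogonal_matrix)
qed

lemma fixed_vector_iff_parallel_section:
  "(\<forall>\<gamma>\<in>first_return_walks w i. walk_prod \<sigma> \<gamma> *v x = x) \<longleftrightarrow> (\<exists>F. parallel_section w \<sigma> F \<and> F i = x)"
proof
  assume fixed: "\<forall>\<gamma>\<in>first_return_walks w i. walk_prod \<sigma> \<gamma> *v x = x"
  define P where "P a = (SOME p. walk w (a # p) \<and> last (a # p) = i)" for a
  have P: "walk w (a # P a) \<and> last (a # P a) = i" for a
    unfolding P_def by (rule someI_ex) (rule exists_walk)
  define F where "F a = walk_prod \<sigma> (a # P a) *v x" for a
  have "parallel_section w \<sigma> F"
    unfolding parallel_section_def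
  proof (intro allI impI)
    fix a b assume "w a b > 0"
    then have "walk w (a # b # P b)" and "last (a # b # P b) = i"
      using P[of b] by auto
    then have "F a = walk_prod \<sigma> (a # b # P b) *v x"
      unfolding F_def using P[of a] by (intro transport_independent_of_walk[OF fixed]) simp_all
    also have "\<dots> = \<sigma> a b *v F b"
      by (simp add: F_def matrix_vector_mul_assoc)
    finally show "F a = \<sigma> a b *v F b" .
  qed
  moreover have "F i = x"
    unfolding F_def using P[of i] by (intro closed_walk_fixes_vector[OF fixed]) simp_all
  ultimately show "\<exists>F. parallel_section w \<sigma> F \<and> F i = x"
    by blast
next
  assume "\<exists>F. parallel_section w \<sigma> F \<and> F i = x"
  then obtain F where F: "parallel_section w \<sigma> F" "F i = x"
    by blast
  show "\<forall>\<gamma>\<in>first_return_walks w i. walk_prod \<sigma> \<gamma> *v x = x"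
  proof
    fix \<gamma> assume "\<gamma> \<in> first_return_walks w i"
    then obtain t where \<gamma>: "\<gamma> = i # t" "walk w (i # t)" "last (i # t) = i"
      by (auto simp: first_return_walks_altdef)
    have "F i = walk_prod \<sigma> (i # t) *v F (last (i # t))"
      by (rule parallel_section_walk[OF F(1) \<gamma>(2)])
    then show "walk_prod \<sigma> \<gamma> *v x = x"
      unfolding \<gamma>(1,3) F(2) ..
  qed
qed

lemma parallel_section_eq_0:
  assumes "parallel_section w \<sigma> F" and "F i = 0"
  shows "F a = 0"
proof -
  obtain p where "walk w (a # p)" and "last (a # p) = i"
    using exists_walk by blast
  then have "F a = walk_prod \<sigma> (a # p) *v F i"
    using parallel_section_walk[OF assms(1)] by metis
  then show ?thesis
    using assms(2) by simp
qed

lemma pos_def_iff_invertible: "pos_def (mat 1 - Omega1 w \<sigma> i) \<longleftrightarrow> invertible (conn_laplacian w \<sigma>)"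
  unfolding pos_def_iff_no_fixed_vector invertible_conn_laplacian_iff fixed_vector_iff_parallel_section
  by (metis parallel_section_eq_0)

end

theorem theorem4p12:
  fixes w :: "'v::finite \<Rightarrow> 'v \<Rightarrow> real" and \<sigma> :: "'v \<Rightarrow> 'v \<Rightarrow> real^'d::finite^'d"
  assumes "connection_graph w \<sigma>" and "CARD('v) \<ge> 2"
  shows "invertible (conn_laplacian w \<sigma>) \<longleftrightarrow> (\<forall>i. pos_def (mat 1 - Omega1 w \<sigma> i))"
proof -
  interpret irreducible_connection w \<sigma>
    using assms unfolding connection_graph_def by unfold_locales blast+
  show ?thesis
    using pos_def_iff_invertible by blast
qed

end
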